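(* Let $u_0,v_0>0$, $s_0>1$, let $\omega_0>0$ and $\omega_1,\omega_2,\dots\in\mathbb{R}$, and let $U_k,V_k:\mathbb{R}\to\mathbb{R}$ ($k\ge1$) be real analytic $2\pi$-periodic functions with Fourier expansions $U_k(t)=\sum_{n\in\mathbb{Z}}\hat U_k(n)e^{int}$, $V_k(t)=\sum_{n\in\mathbb{Z}}\hat V_k(n)e^{int}$. Put $\omega(\varepsilon)=\sum_{k\ge0}\omega_k\varepsilon^k$, $U(t,\varepsilon)=\sum_{k\ge1}U_k(t)\varepsilon^k$, $V(t,\varepsilon)=\sum_{k\ge1}V_k(t)\varepsilon^k$, and let $d_k(t)$ denote the coefficient of $\varepsilon^k$ in the formal Taylor expansion in $\varepsilon$ of $$\frac{U(t,\varepsilon)+u_0}{V(t-s_0\omega(\varepsilon),\varepsilon)+v_0},$$ so that $d_0=u_0/v_0$. For $k\ge2$ write $d_k(t)=\sum_{n\in\mathbb{Z}}\hat d_k(n)e^{int}$ with $\hat d_k(n)=\overline{\hat d_k(-n)}$. Then for every $k\ge2$ and $n\in\mathbb{Z}$, $$\hat d_k(n)=\frac{d_0}{v_0}\,ni\,\omega_{k-1}s_0\,\hat V_1(n)e^{-ni\omega_0s_0}+h,$$ where $h$ is an expression whose terms depend only on $\hat U_1,\hat V_1,\dots,\hat U_k,\hat V_k$ and $\omega_0,\dots,\omega_{k-2}$ (and on $n$, $u_0$, $v_0$, $s_0$).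
   Context: The expansion of $V_j(t-s_0\omega(\varepsilon))$ in $\varepsilon$ is the Taylor expansion of $V_j$ about $t-s_0\omega_0$ composed with $\omega(\varepsilon)-\omega_0$; the quotient is expanded as a formal power series in $\varepsilon$. *)

theory Defs
  imports "HOL-Analysis.Analysis" "HOL-Computational_Algebra.Formal_Power_Series"
begin

definition real_analytic :: "(real \<Rightarrow> real) \<Rightarrow> bool" where
  "real_analytic f \<longleftrightarrow> (\<forall>x. \<exists>r>0. \<exists>a::nat \<Rightarrow> real.
      \<forall>y. \<bar>y - x\<bar> < r \<longrightarrow> (\<lambda>m. a m * (y - x) ^ m) sums f y)"

definition periodic_2pi :: "(real \<Rightarrow> real) \<Rightarrow> bool" where
  "periodic_2pi f \<longleftrightarrow> (\<forall>t. f (t + 2 * pi) = f t)"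

definition fcoeff :: "(real \<Rightarrow> real) \<Rightarrow> int \<Rightarrow> complex" where
  "fcoeff f n = integral {0..2 * pi} (\<lambda>t. complex_of_real (f t) * cis (- (of_int n * t))) / complex_of_real (2 * pi)"

definition taylor_fps :: "(real \<Rightarrow> real) \<Rightarrow> real \<Rightarrow> real fps" where
  "taylor_fps f x = Abs_fps (\<lambda>m. (deriv ^^ m) f x / fact m)"

definition omega_fps :: "(nat \<Rightarrow> real) \<Rightarrow> real fps" where
  "omega_fps \<omega> = Abs_fps \<omega>"

text \<open>Formal expansion of V(t - s0 omega(eps), eps) = sum_{j>=1} V_j(t - s0 omega(eps)) eps^j,
  where V_j(t - s0 omega(eps)) is the Taylor series of V_j about t - s0 omega_0 composed
  with -s0 (omega(eps) - omega_0).\<close>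
definition shifted_V_fps :: "(nat \<Rightarrow> real \<Rightarrow> real) \<Rightarrow> (nat \<Rightarrow> real) \<Rightarrow> real \<Rightarrow> real \<Rightarrow> real fps" where
  "shifted_V_fps V \<omega> s0 t = Abs_fps (\<lambda>k. \<Sum>j=1..k.
     fps_nth (fps_compose (taylor_fps (V j) (t - s0 * \<omega> 0))
                  (fps_const (- s0) * (omega_fps \<omega> - fps_const (\<omega> 0)))) (k - j))"

definition U_fps :: "(nat \<Rightarrow> real \<Rightarrow> real) \<Rightarrow> real \<Rightarrow> real fps" where
  "U_fps U t = Abs_fps (\<lambda>k. if k = 0 then 0 else U k t)"

definition dcoef :: "(nat \<Rightarrow> real \<Rightarrow> real) \<Rightarrow> (nat \<Rightarrow> real \<Rightarrow> real) \<Rightarrow> (nat \<Rightarrow> real)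
    \<Rightarrow> real \<Rightarrow> real \<Rightarrow> real \<Rightarrow> nat \<Rightarrow> real \<Rightarrow> real" where
  "dcoef U V \<omega> u0 v0 s0 k t =
     fps_nth ((U_fps U t + fps_const u0) * inverse (shifted_V_fps V \<omega> s0 t + fps_const v0)) k"

end

(*
  Truncating \<omega> after \<omega>_(k-2) does not change the coefficients of the denominator
  V(t - s0 \<omega>(\<epsilon>), \<epsilon>) + v0 below \<epsilon>^k, and in its \<epsilon>^k coefficient \<omega>_(k-1) enters only
  through the term V_1(t - s0 \<omega>(\<epsilon>)) \<epsilon>, as -s0 \<omega>_(k-1) V_1'(t - s0 \<omega>_0). A first-order
  perturbation of the quotient turns this into the summand (u0/v0^2) s0 \<omega>_(k-1) V_1'(t - s0 \<omega>_0)
  of d_k, whose Fourier coefficient is the main term: differentiation multiplies the n-th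
  coefficient by i n, the shift by exp(-i n s0 \<omega>_0). What is left is d_k for the truncated \<omega>,
  which involves only U_j, V_j with j \<le> k; continuous 2\<pi>-periodic functions are determined by
  their Fourier coefficients (Stone-Weierstrass on the circle), so this remainder is a function
  of the Fourier data.
*)
theory Submission
  imports Defs "HOL-Library.Periodic_Fun"
begin

section \<open>Truncated formal power series\<close>

lemma fps_cutoff_idem [simp]: "fps_cutoff n (fps_cutoff n f) = fps_cutoff n f"
  by (simp add: fps_eq_iff)

lemma fps_cutoff_mult: "fps_cutoff n (f * g) = fps_cutoff n (fps_cutoff n f * fps_cutoff n g)"
  by (simp add: fps_eq_iff fps_cutoff_left_mult_nth fps_cutoff_right_mult_nth)

lemma fps_cutoff_power: "fps_cutoff n (f ^ i) = fps_cutoff n (fps_cutoff n f ^ i)"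
proof (induction i)
  case (Suc i)
  have "fps_cutoff n (f ^ Suc i) = fps_cutoff n (fps_cutoff n f * fps_cutoff n (f ^ i))"
    using fps_cutoff_mult[of n f "f ^ i"] by simp
  also have "\<dots> = fps_cutoff n (fps_cutoff n f * fps_cutoff n (fps_cutoff n f ^ i))"
    by (simp only: Suc.IH)
  also have "\<dots> = fps_cutoff n (fps_cutoff n f ^ Suc i)"
    using fps_cutoff_mult[of n "fps_cutoff n f" "fps_cutoff n f ^ i"] by simp
  finally show ?case .
qed simp

lemma fps_cutoff_compose_cong:
  assumes "fps_cutoff n g = fps_cutoff n g'"
  shows "fps_cutoff n (f oo g) = fps_cutoff n (f oo g')"
proof (subst fps_cutoff_eq_fps_cutoff_iff, intro allI impI)
  fix k assume "k < n"
  have "fps_cutoff n (g ^ i) = fps_cutoff n (g' ^ i)" for i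
    using fps_cutoff_power[of n g i] fps_cutoff_power[of n g' i] assms by simp
  with \<open>k < n\<close> have "fps_nth (g ^ i) k = fps_nth (g' ^ i) k" for i
    by (metis fps_cutoff_nth)
  then show "fps_nth (f oo g) k = fps_nth (f oo g') k"
    unfolding fps_compose_nth by simp
qed

lemma fps_cutoff_mult_inverse_cong:
  fixes X Y X' Y' :: "'a::field fps"
  assumes X: "fps_cutoff n X = fps_cutoff n X'" and Y: "fps_cutoff n Y = fps_cutoff n Y'"
    and Y0: "fps_nth Y 0 \<noteq> 0"
  shows "fps_cutoff n (X * inverse Y) = fps_cutoff n (X' * inverse Y')"
proof (cases "n = 0")
  case False
  then have "fps_nth Y' 0 \<noteq> 0"
    using arg_cong[OF Y, of "\<lambda>f. fps_nth f 0"] Y0 by simp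
  then have "fps_cutoff n (inverse Y) = fps_cutoff n (inverse Y')"
    using fps_cutoff_inverse[OF Y0, of n] fps_cutoff_inverse[of Y' n] Y by argo
  then show ?thesis
    using fps_cutoff_mult[of n X "inverse Y"] fps_cutoff_mult[of n X' "inverse Y'"] X by argo
qed simp

lemma fps_mult_nth_if_cutoff_eq_0:
  fixes d h :: "'a::comm_ring_1 fps"
  assumes "fps_cutoff m d = 0"
  shows "fps_nth (d * h) m = fps_nth d m * fps_nth h 0"
proof -
  obtain r where "d = fps_X ^ m * r"
    using assms fps_conv_fps_X_power_mult_fps_shift fps_cutoff_zero_iff by metis
  then show ?thesis
    by (simp add: mult.assoc fps_X_power_mult_nth)
qed

lemma fps_nth_mult_inverse_perturb:
  fixes X Y Y' :: "'a::field fps"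
  assumes cutoff: "fps_cutoff k Y = fps_cutoff k Y'" and Y0: "fps_nth Y 0 \<noteq> 0" and "k > 0"
  shows "fps_nth (X * inverse Y) k
           = fps_nth (X * inverse Y') k + fps_nth X 0 * (fps_nth Y' k - fps_nth Y k) / (fps_nth Y 0)\<^sup>2"
proof -
  have Y'0: "fps_nth Y' 0 = fps_nth Y 0"
    using arg_cong[OF cutoff, of "\<lambda>f. fps_nth f 0"] \<open>k > 0\<close> by simp
  have "(Y' - Y) * (X * inverse Y * inverse Y')
      = X * ((Y' * inverse Y') * inverse Y - (Y * inverse Y) * inverse Y')"
    by (simp add: algebra_simps)
  then have "X * inverse Y - X * inverse Y' = (Y' - Y) * (X * inverse Y * inverse Y')"
    using Y0 Y'0 by (simp add: inverse_mult_eq_1' right_diff_distrib)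
  moreover have "fps_cutoff k (Y' - Y) = 0"
    using cutoff by (simp add: fps_cutoff_diff)
  ultimately have "fps_nth (X * inverse Y) k - fps_nth (X * inverse Y') k
      = (fps_nth Y' k - fps_nth Y k) * (fps_nth X 0 * inverse (fps_nth Y 0) * inverse (fps_nth Y 0))"
    using fps_mult_nth_if_cutoff_eq_0[of k "Y' - Y"] Y'0 by (simp flip: fps_sub_nth)
  then show ?thesis
    using Y0 by (simp add: field_simps power2_eq_square)
qed

lemma fps_nth_power_eq_if_cutoff_eq:
  fixes g g' :: "'a::comm_ring_1 fps"
  assumes cutoff: "fps_cutoff m g = fps_cutoff m g'" and "fps_nth g 0 = 0" "fps_nth g' 0 = 0" "i \<noteq> 1"
  shows "fps_nth (g ^ i) m = fps_nth (g' ^ i) m"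
proof (cases i)
  case (Suc l)
  with \<open>i \<noteq> 1\<close> have "l > 0" by simp
  have "g ^ i - g' ^ i = (g - g') * g ^ l + (g ^ l - g' ^ l) * g'"
    using Suc by (simp add: algebra_simps)
  moreover have "fps_cutoff m (g - g') = 0" "fps_cutoff m (g ^ l - g' ^ l) = 0"
    using cutoff fps_cutoff_power[of m g l] fps_cutoff_power[of m g' l] by (simp_all add: fps_cutoff_diff)
  ultimately have "fps_nth (g ^ i - g' ^ i) m = 0"
    using \<open>l > 0\<close> assms(2,3) by (simp add: fps_mult_nth_if_cutoff_eq_0 fps_nth_power_0 zero_power)
  then show ?thesis by simp
qed simp

lemma fps_compose_nth_perturb:
  fixes f g g' :: "'a::comm_ring_1 fps"
  assumes "fps_cutoff m g = fps_cutoff m g'" "fps_nth g 0 = 0" "fps_nth g' 0 = 0" "m > 0"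
  shows "fps_nth (f oo g) m = fps_nth (f oo g') m + fps_nth f 1 * (fps_nth g m - fps_nth g' m)"
proof -
  have "fps_nth f i * fps_nth (g ^ i) m = fps_nth f i * fps_nth (g' ^ i) m
          + (if i = 1 then fps_nth f 1 * (fps_nth g m - fps_nth g' m) else 0)" for i
    using fps_nth_power_eq_if_cutoff_eq[OF assms(1-3), of i] by (auto simp: algebra_simps)
  then show ?thesis
    using \<open>m > 0\<close> by (simp add: fps_compose_nth sum.distrib)
qed

lemma fps_nth_mult_inverse_rec:
  fixes X Y :: "'a::field fps"
  assumes "fps_nth Y 0 \<noteq> 0"
  shows "fps_nth (X * inverse Y) i
           = (fps_nth X i - (\<Sum>j<i. fps_nth (X * inverse Y) j * fps_nth Y (i - j))) / fps_nth Y 0"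
proof -
  have "fps_nth X i = fps_nth (X * inverse Y * Y) i"
    using assms by (simp add: mult.assoc inverse_mult_eq_1)
  also have "\<dots> = (\<Sum>j<i. fps_nth (X * inverse Y) j * fps_nth Y (i - j)) + fps_nth (X * inverse Y) i * fps_nth Y 0"
    unfolding fps_mult_nth[of "X * inverse Y"] by (simp add: atLeast0AtMost lessThan_Suc_atMost[symmetric])
  finally show ?thesis
    using assms by (simp add: field_simps)
qed

lemma continuous_on_fps_nth_mult_inverse:
  fixes X Y :: "'a::topological_space \<Rightarrow> 'b::real_normed_field fps"
  assumes "\<And>i. continuous_on S (\<lambda>t. fps_nth (X t) i)" "\<And>i. continuous_on S (\<lambda>t. fps_nth (Y t) i)"
    and "\<And>t. t \<in> S \<Longrightarrow> fps_nth (Y t) 0 \<noteq> 0"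
  shows "continuous_on S (\<lambda>t. fps_nth (X t * inverse (Y t)) i)"
proof (induction i rule: less_induct)
  case (less i)
  have "continuous_on S (\<lambda>t. (fps_nth (X t) i
          - (\<Sum>j<i. fps_nth (X t * inverse (Y t)) j * fps_nth (Y t) (i - j))) / fps_nth (Y t) 0)"
    using assms less by (intro continuous_intros) auto
  then show ?case
    using assms(3) by (simp cong: continuous_on_cong flip: fps_nth_mult_inverse_rec)
qed

section \<open>The coefficients of the quotient series\<close>

definition phase_shift_fps :: "(nat \<Rightarrow> real) \<Rightarrow> real \<Rightarrow> real fps" where
  "phase_shift_fps \<omega> s0 = fps_const (- s0) * (omega_fps \<omega> - fps_const (\<omega> 0))"

lemma fps_nth_phase_shift_fps:
  "fps_nth (phase_shift_fps \<omega> s0) i = (if i = 0 then 0 else - s0 * \<omega> i)"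
  by (simp add: phase_shift_fps_def omega_fps_def)

lemma fps_nth_shifted_V_fps:
  "fps_nth (shifted_V_fps V \<omega> s0 t) k
     = (\<Sum>j=1..k. fps_nth (taylor_fps (V j) (t - s0 * \<omega> 0) oo phase_shift_fps \<omega> s0) (k - j))"
  by (simp add: shifted_V_fps_def phase_shift_fps_def)

lemma shifted_V_fps_truncate_omega:
  fixes \<omega> :: "nat \<Rightarrow> real"
  assumes "k \<ge> 2"
  defines "\<omega>' \<equiv> \<lambda>j. if j \<le> k - 2 then \<omega> j else 0"
  shows "fps_cutoff k (shifted_V_fps V \<omega> s0 t) = fps_cutoff k (shifted_V_fps V \<omega>' s0 t)"
    and "fps_nth (shifted_V_fps V \<omega> s0 t) k
           = fps_nth (shifted_V_fps V \<omega>' s0 t) k - s0 * \<omega> (k - 1) * deriv (V 1) (t - s0 * \<omega> 0)"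
proof -
  let ?T = "\<lambda>j. taylor_fps (V j) (t - s0 * \<omega> 0)"
  have \<omega>'0: "\<omega>' 0 = \<omega> 0"
    by (simp add: \<omega>'_def)
  have cutoff: "fps_cutoff (k - 1) (phase_shift_fps \<omega> s0) = fps_cutoff (k - 1) (phase_shift_fps \<omega>' s0)"
    by (auto simp: fps_eq_iff fps_nth_phase_shift_fps \<omega>'_def)
  then have low: "fps_nth (T oo phase_shift_fps \<omega> s0) i = fps_nth (T oo phase_shift_fps \<omega>' s0) i"
    if "i < k - 1" for T i
    using fps_cutoff_compose_cong that by (metis fps_cutoff_nth)
  show "fps_cutoff k (shifted_V_fps V \<omega> s0 t) = fps_cutoff k (shifted_V_fps V \<omega>' s0 t)"
    by (auto simp: fps_eq_iff fps_nth_shifted_V_fps \<omega>'0 intro!: sum.cong low)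
  have "\<omega>' (k - 1) = 0"
    using assms by (simp add: \<omega>'_def)
  then have "fps_nth (?T 1 oo phase_shift_fps \<omega> s0) (k - 1)
      = fps_nth (?T 1 oo phase_shift_fps \<omega>' s0) (k - 1) - s0 * \<omega> (k - 1) * deriv (V 1) (t - s0 * \<omega> 0)"
    using assms fps_compose_nth_perturb[OF cutoff, of "?T 1"]
    by (simp add: fps_nth_phase_shift_fps taylor_fps_def)
  moreover have "(\<Sum>j=2..k. fps_nth (?T j oo phase_shift_fps \<omega> s0) (k - j))
      = (\<Sum>j=2..k. fps_nth (?T j oo phase_shift_fps \<omega>' s0) (k - j))"
    by (intro sum.cong refl low) auto
  ultimately show "fps_nth (shifted_V_fps V \<omega> s0 t) k
      = fps_nth (shifted_V_fps V \<omega>' s0 t) k - s0 * \<omega> (k - 1) * deriv (V 1) (t - s0 * \<omega> 0)"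
    using assms by (simp add: fps_nth_shifted_V_fps \<omega>'0 sum.atLeast_Suc_atMost numeral_2_eq_2)
qed

lemma dcoef_truncate_omega:
  assumes "k \<ge> 2" and "v0 \<noteq> 0"
  shows "dcoef U V \<omega> u0 v0 s0 k t
           = dcoef U V (\<lambda>j. if j \<le> k - 2 then \<omega> j else 0) u0 v0 s0 k t
             + u0 / v0\<^sup>2 * s0 * \<omega> (k - 1) * deriv (V 1) (t - s0 * \<omega> 0)"
proof -
  let ?\<omega>' = "\<lambda>j. if j \<le> k - 2 then \<omega> j else 0"
  let ?Y = "shifted_V_fps V \<omega> s0 t + fps_const v0"
  let ?Y' = "shifted_V_fps V ?\<omega>' s0 t + fps_const v0"
  note truncate = shifted_V_fps_truncate_omega[OF \<open>k \<ge> 2\<close>, of V \<omega> s0 t]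
  have "fps_cutoff k ?Y = fps_cutoff k ?Y'"
    using truncate(1) by (simp add: fps_cutoff_add)
  moreover have "fps_nth ?Y 0 = v0"
    by (simp add: fps_nth_shifted_V_fps)
  ultimately show ?thesis
    unfolding dcoef_def
    using fps_nth_mult_inverse_perturb[of k ?Y ?Y' "U_fps U t + fps_const u0"] assms truncate(2)
    by (simp add: U_fps_def)
qed

lemma dcoef_cong:
  assumes "v0 \<noteq> 0" and "\<And>j. 1 \<le> j \<Longrightarrow> j \<le> k \<Longrightarrow> U j = U' j \<and> V j = V' j"
  shows "dcoef U V \<omega> u0 v0 s0 k = dcoef U' V' \<omega> u0 v0 s0 k"
proof
  fix t
  have "fps_cutoff (Suc k) (U_fps U t + fps_const u0) = fps_cutoff (Suc k) (U_fps U' t + fps_const u0)"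
    using assms(2) by (simp add: fps_eq_iff U_fps_def)
  moreover have "fps_cutoff (Suc k) (shifted_V_fps V \<omega> s0 t + fps_const v0)
      = fps_cutoff (Suc k) (shifted_V_fps V' \<omega> s0 t + fps_const v0)"
    using assms(2) by (auto simp: fps_eq_iff fps_nth_shifted_V_fps intro!: sum.cong)
  ultimately have "fps_cutoff (Suc k) ((U_fps U t + fps_const u0) * inverse (shifted_V_fps V \<omega> s0 t + fps_const v0))
      = fps_cutoff (Suc k) ((U_fps U' t + fps_const u0) * inverse (shifted_V_fps V' \<omega> s0 t + fps_const v0))"
    using assms(1) by (intro fps_cutoff_mult_inverse_cong) (simp_all add: fps_nth_shifted_V_fps)
  then show "dcoef U V \<omega> u0 v0 s0 k t = dcoef U' V' \<omega> u0 v0 s0 k t"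
    unfolding dcoef_def by (metis fps_cutoff_nth lessI)
qed

lemma continuous_on_dcoef:
  assumes "v0 \<noteq> 0" and "\<And>j. j \<ge> 1 \<Longrightarrow> continuous_on UNIV (U j)"
    and "\<And>j m. j \<ge> 1 \<Longrightarrow> continuous_on UNIV ((deriv ^^ m) (V j))"
  shows "continuous_on UNIV (dcoef U V \<omega> u0 v0 s0 k)"
proof -
  have "continuous_on UNIV (\<lambda>t. fps_nth (U_fps U t + fps_const u0) i)" for i
    using assms(2) by (cases "i = 0") (auto simp: U_fps_def)
  moreover have "continuous_on UNIV (\<lambda>t. fps_nth (taylor_fps (V j) (t - c)) l)" if "j \<ge> 1" for j l c
    unfolding taylor_fps_def
    by (auto intro!: continuous_intros continuous_on_compose2[OF assms(3)[OF that]])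
  then have "continuous_on UNIV (\<lambda>t. fps_nth (shifted_V_fps V \<omega> s0 t + fps_const v0) i)" for i
    unfolding fps_add_nth fps_nth_shifted_V_fps fps_compose_nth
    by (intro continuous_intros) auto
  ultimately show ?thesis
    unfolding dcoef_def using assms(1)
    by (intro continuous_on_fps_nth_mult_inverse) (auto simp: fps_nth_shifted_V_fps)
qed

section \<open>Real analytic functions\<close>

lemma real_analytic_has_real_derivative_deriv_funpow:
  assumes "real_analytic f"
  shows "((deriv ^^ m) f has_real_derivative (deriv ^^ Suc m) f x) (at x)"
proof -
  obtain r a where "r > 0" and a: "\<And>y. \<bar>y - x\<bar> < r \<Longrightarrow> (\<lambda>n. a n * (y - x) ^ n) sums f y"
    using assms unfolding real_analytic_def by blast
  define F where "F m = (fps_deriv ^^ m) (Abs_fps a)" for m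
  have radius: "ereal \<bar>y - x\<bar> < fps_conv_radius (F m)" if "\<bar>y - x\<bar> < r" for y m
  proof -
    define z where "z = (\<bar>y - x\<bar> + r) / 2"
    have "summable (\<lambda>n. a n * z ^ n)"
      using a[of "x + z"] that by (simp add: z_def sums_summable)
    then have "ereal \<bar>y - x\<bar> < fps_conv_radius (Abs_fps a)"
      using conv_radius_geI[of a z] that unfolding fps_conv_radius_def z_def
      by (simp add: order_less_le_trans[rotated])
    also have "\<dots> \<le> fps_conv_radius (F m)"
      by (induction m) (auto simp: F_def intro: order_trans fps_conv_radius_deriv)
    finally show ?thesis .
  qed
  have has_deriv: "((\<lambda>y. eval_fps (F m) (y - x)) has_real_derivative eval_fps (F (Suc m)) (y - x)) (at y)"
    if "\<bar>y - x\<bar> < r" for m y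
  proof -
    have "ereal (norm (y - x)) < fps_conv_radius (F m)"
      using radius[OF that] by simp
    from has_field_derivative_eval_fps[OF this, of UNIV]
    show ?thesis
      using DERIV_shift[of "eval_fps (F m)" _ y "- x"] by (simp add: F_def)
  qed
  have local: "(deriv ^^ m) f y = eval_fps (F m) (y - x)" if "\<bar>y - x\<bar> < r" for m y
    using that
  proof (induction m arbitrary: y)
    case 0
    then show ?case
      using sums_unique[OF a[OF 0]] by (simp add: F_def eval_fps_def)
  next
    case (Suc m)
    have "((deriv ^^ m) f has_real_derivative eval_fps (F (Suc m)) (y - x)) (at y)"
      by (rule has_field_derivative_transform_within_open[OF has_deriv[OF Suc.prems], of "ball x r"])
        (use Suc in \<open>auto simp: dist_real_def abs_minus_commute\<close>)
    then show ?case
      by (simp add: DERIV_imp_deriv)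
  qed
  have "((deriv ^^ m) f has_real_derivative eval_fps (F (Suc m)) (x - x)) (at x)"
    by (rule has_field_derivative_transform_within_open[OF has_deriv, of x "ball x r"])
      (use \<open>r > 0\<close> local in \<open>auto simp: dist_real_def abs_minus_commute\<close>)
  then show ?thesis
    using local[of x "Suc m"] \<open>r > 0\<close> by simp
qed

lemma real_analytic_continuous_on_deriv_funpow:
  "real_analytic f \<Longrightarrow> continuous_on UNIV ((deriv ^^ m) f)"
  by (meson DERIV_isCont continuous_at_imp_continuous_on real_analytic_has_real_derivative_deriv_funpow)

section \<open>Fourier coefficients\<close>

lemma periodic_2pi_plus_of_int:
  assumes "periodic_2pi f"
  shows "f (t + of_int q * (2 * pi)) = f t"
proof -
  interpret periodic_fun_simple f "2 * pi"
    using assms by unfold_locales (simp add: periodic_2pi_def)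
  show ?thesis
    by (rule plus_of_int)
qed

lemma integral_periodic_shift:
  fixes G :: "real \<Rightarrow> 'a::banach"
  assumes cont: "continuous_on UNIV G" and per: "\<And>t. G (t + p) = G t" and "p > 0"
  shows "integral {0..p} (\<lambda>t. G (t + c)) = integral {0..p} G"
proof -
  interpret periodic_fun_simple G p
    using per by unfold_locales
  define h where "h = c - of_int \<lfloor>c / p\<rfloor> * p"
  have h: "0 \<le> h" "h \<le> p"
    using floor_divide_lower[OF \<open>p > 0\<close>, of c] floor_divide_upper[OF \<open>p > 0\<close>, of c]
    by (simp_all add: h_def algebra_simps)
  have int: "G integrable_on {a..b}" for a b
    by (rule integrable_continuous_interval) (rule continuous_on_subset[OF cont], simp)
  have "G (t + c) = G (t + h)" for t
    using plus_of_int[of "t + h" "\<lfloor>c / p\<rfloor>"] by (simp add: h_def algebra_simps)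
  then have "integral {0..p} (\<lambda>t. G (t + c)) = integral {h..p + h} G"
    using integral_shift_Icc_real[of 0 p G h] by (simp add: o_def add.commute)
  also have "\<dots> = integral {h..p} G + integral {p..p + h} G"
    using Henstock_Kurzweil_Integration.integral_combine[of h p "p + h" G] int h by simp
  also have "integral {p..p + h} G = integral {0..h} G"
    using integral_shift_Icc_real[of 0 h G p] by (simp add: o_def add.commute plus_period)
  also have "integral {h..p} G + integral {0..h} G = integral {0..p} G"
    using Henstock_Kurzweil_Integration.integral_combine[of 0 h p G] int h by (simp add: add.commute)
  finally show ?thesis .
qed

lemma integrable_fcoeff:
  assumes "continuous_on UNIV f"
  shows "(\<lambda>t. complex_of_real (f t) * cis (- (of_int n * t))) integrable_on {0..2 * pi}"
  by (rule integrable_continuous_interval)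
    (intro continuous_intros continuous_on_subset[OF assms], simp)

lemma fcoeff_add:
  assumes "continuous_on UNIV f" "continuous_on UNIV g"
  shows "fcoeff (\<lambda>t. f t + g t) n = fcoeff f n + fcoeff g n"
  using integral_add[OF integrable_fcoeff[OF assms(1)] integrable_fcoeff[OF assms(2)], of n n]
  by (simp add: fcoeff_def distrib_right add_divide_distrib)

lemma fcoeff_diff:
  assumes "continuous_on UNIV f" "continuous_on UNIV g"
  shows "fcoeff (\<lambda>t. f t - g t) n = fcoeff f n - fcoeff g n"
  using integral_diff[OF integrable_fcoeff[OF assms(1)] integrable_fcoeff[OF assms(2)], of n n]
  by (simp add: fcoeff_def left_diff_distrib diff_divide_distrib)

lemma fcoeff_cmult: "fcoeff (\<lambda>t. c * f t) n = complex_of_real c * fcoeff f n"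
  by (simp add: fcoeff_def mult.assoc)

lemma fcoeff_shift:
  assumes cont: "continuous_on UNIV g" and per: "periodic_2pi g"
  shows "fcoeff (\<lambda>t. g (t - a)) n = exp (- (of_int n * \<i> * of_real a)) * fcoeff g n"
proof -
  define G where "G t = complex_of_real (g t) * cis (- (of_int n * t))" for t
  have "continuous_on UNIV G"
    unfolding G_def by (intro continuous_intros cont)
  moreover have "G (t + 2 * pi) = G t" for t
  proof -
    have "cis (- (of_int n * (t + 2 * pi))) = cis (- (of_int n * t)) * cis (2 * pi * of_int (- n))"
      by (simp add: cis_mult algebra_simps)
    moreover have "cis (2 * pi * of_int (- n)) = 1"
      by (rule cis_multiple_2pi) simp
    ultimately show ?thesis
      using per by (simp add: G_def periodic_2pi_def)
  qed
  ultimately have shift: "integral {0..2 * pi} (\<lambda>t. G (t - a)) = integral {0..2 * pi} G"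
    using integral_periodic_shift[of G "2 * pi" "- a"] by simp
  have "complex_of_real (g (t - a)) * cis (- (of_int n * t)) = cis (- (of_int n * a)) * G (t - a)" for t
    by (simp add: G_def cis_mult algebra_simps)
  then have "fcoeff (\<lambda>t. g (t - a)) n
      = integral {0..2 * pi} (\<lambda>t. cis (- (of_int n * a)) * G (t - a)) / complex_of_real (2 * pi)"
    by (simp add: fcoeff_def)
  also have "\<dots> = cis (- (of_int n * a)) * (integral {0..2 * pi} G / complex_of_real (2 * pi))"
    by (simp add: shift)
  also have "integral {0..2 * pi} G / complex_of_real (2 * pi) = fcoeff g n"
    by (simp add: fcoeff_def G_def[abs_def])
  finally show ?thesis
    by (simp add: cis_conv_exp mult_ac)
qed

lemma has_vector_derivative_cis_linear:
  "((\<lambda>t. cis (b * t)) has_vector_derivative (of_real b * \<i> * cis (b * t))) (at t within S)"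
proof -
  have "((\<lambda>t. cis (b * t)) has_derivative (\<lambda>h. (b * h) *\<^sub>R (\<i> * cis (b * t)))) (at t within S)"
    by (auto intro!: derivative_eq_intros)
  then show ?thesis
    by (simp add: has_vector_derivative_def scaleR_conv_of_real mult.assoc mult.left_commute)
qed

lemma fcoeff_deriv:
  assumes deriv: "\<And>t. (g has_real_derivative g' t) (at t)"
    and cont: "continuous_on UNIV g'" and per: "periodic_2pi g"
  shows "fcoeff g' n = of_int n * \<i> * fcoeff g n"
proof -
  define e where "e t = cis (- (of_int n * t))" for t
  define I where "I h = integral {0..2 * pi} (\<lambda>t. complex_of_real (h t) * e t)" for h
  have "continuous_on UNIV g"
    using deriv by (meson DERIV_isCont continuous_at_imp_continuous_on)
  then have int: "(\<lambda>t. complex_of_real (g t) * e t) integrable_on {0..2 * pi}"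
    "(\<lambda>t. complex_of_real (g' t) * e t) integrable_on {0..2 * pi}"
    using integrable_fcoeff cont unfolding e_def by blast+
  have "(e has_vector_derivative - (of_int n * \<i>) * e t) (at t within S)" for t S
    using has_vector_derivative_cis_linear[of "- of_int n" t S] by (simp add: e_def[abs_def])
  then have "((\<lambda>t. complex_of_real (g t) * e t) has_vector_derivative
      complex_of_real (g t) * (- (of_int n * \<i>) * e t) + complex_of_real (g' t) * e t) (at t within S)" for t S
    by (rule has_vector_derivative_mult[OF has_vector_derivative_of_real[OF has_field_derivative_at_within[OF deriv]]])
  then have "((\<lambda>t. complex_of_real (g t) * (- (of_int n * \<i>) * e t) + complex_of_real (g' t) * e t) has_integral
      complex_of_real (g (2 * pi)) * e (2 * pi) - complex_of_real (g 0) * e 0) {0..2 * pi}"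
    by (intro fundamental_theorem_of_calculus) auto
  moreover have "g (2 * pi) = g 0"
    using per[unfolded periodic_2pi_def, rule_format, of 0] by simp
  moreover have "e (2 * pi) = e 0"
    using cis_multiple_2pi[of "of_int (- n)"] by (simp add: e_def mult.commute)
  ultimately have "integral {0..2 * pi}
      (\<lambda>t. complex_of_real (g' t) * e t - of_int n * \<i> * (complex_of_real (g t) * e t)) = 0"
    by (simp add: integral_unique algebra_simps)
  then have "I g' - of_int n * \<i> * I g = 0"
    unfolding I_def using integral_diff[OF int(2) integrable_on_mult_right[OF int(1)]] by simp
  then show ?thesis
    by (simp add: fcoeff_def I_def e_def)
qed

lemma periodic_2pi_deriv: "periodic_2pi f \<Longrightarrow> periodic_2pi (deriv f)"
  unfolding periodic_2pi_def deriv_def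
  using DERIV_shift[of f _ _ "2 * pi"] by presburger

lemma fcoeff_deriv_shift:
  assumes "real_analytic V" and "periodic_2pi V"
  shows "fcoeff (\<lambda>t. deriv V (t - a)) n = of_int n * \<i> * fcoeff V n * exp (- (of_int n * \<i> * of_real a))"
proof -
  have "fcoeff (\<lambda>t. deriv V (t - a)) n = exp (- (of_int n * \<i> * of_real a)) * fcoeff (deriv V) n"
    using real_analytic_continuous_on_deriv_funpow[OF assms(1), of 1] periodic_2pi_deriv[OF assms(2)]
    by (intro fcoeff_shift) simp_all
  also have "fcoeff (deriv V) n = of_int n * \<i> * fcoeff V n"
    using real_analytic_has_real_derivative_deriv_funpow[OF assms(1), of 0]
      real_analytic_continuous_on_deriv_funpow[OF assms(1), of 1] assms(2)
    by (intro fcoeff_deriv) simp_all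
  finally show ?thesis
    by (simp add: mult_ac)
qed

section \<open>Uniqueness of Fourier coefficients\<close>

inductive_set trig_polys :: "(real \<Rightarrow> complex) set" where
  cis: "(\<lambda>t. c * cis (of_int m * t)) \<in> trig_polys"
| add: "f \<in> trig_polys \<Longrightarrow> g \<in> trig_polys \<Longrightarrow> (\<lambda>t. f t + g t) \<in> trig_polys"

lemma trig_polys_mult_cis:
  assumes "g \<in> trig_polys"
  shows "(\<lambda>t. c * cis (of_int m * t) * g t) \<in> trig_polys"
  using assms
proof induction
  case (cis d m')
  have "(\<lambda>t. (c * d) * cis (of_int (m + m') * t)) \<in> trig_polys"
    by (rule trig_polys.cis)
  then show ?case
    by (simp add: cis_mult algebra_simps)
next
  case (add f g)
  from trig_polys.add[OF add.IH] show ?case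
    by (simp add: algebra_simps)
qed

lemma trig_polys_mult:
  assumes "f \<in> trig_polys" "g \<in> trig_polys"
  shows "(\<lambda>t. f t * g t) \<in> trig_polys"
  using assms(1)
proof induction
  case (cis c m)
  show ?case
    by (rule trig_polys_mult_cis[OF assms(2)])
next
  case (add f1 f2)
  from trig_polys.add[OF add.IH] show ?case
    by (simp add: algebra_simps)
qed

lemma continuous_on_trig_polys: "h \<in> trig_polys \<Longrightarrow> continuous_on UNIV h"
  by (induction rule: trig_polys.induct) (auto intro!: continuous_intros)

lemma real_polynomial_function_cis_in_trig_polys:
  fixes p :: "complex \<Rightarrow> real"
  assumes "real_polynomial_function p"
  shows "(\<lambda>t. complex_of_real (p (cis t))) \<in> trig_polys"
  using assms
proof induction
  case (linear l)
  have "l (cis t) = cos t * l 1 + sin t * l \<i>" for t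
  proof -
    have "cis t = cos t *\<^sub>R 1 + sin t *\<^sub>R \<i>"
      by (simp add: complex_eq_iff)
    then show ?thesis
      using linear by (simp add: bounded_linear.linear linear_add linear_scale)
  qed
  then have "complex_of_real (l (cis t))
      = (of_real (l 1) - \<i> * of_real (l \<i>)) / 2 * cis (of_int 1 * t)
        + (of_real (l 1) + \<i> * of_real (l \<i>)) / 2 * cis (of_int (- 1) * t)" for t
    by (simp add: complex_eq_iff field_simps)
  then show ?case
    using trig_polys.add[OF trig_polys.cis trig_polys.cis] by presburger
next
  case (const c)
  then show ?case
    using trig_polys.cis[of "complex_of_real c" 0] by simp
next
  case (add f g)
  then show ?case
    using trig_polys.add by simp
next
  case (mult f g)
  then show ?case
    using trig_polys_mult by simp
qed

lemma integral_mult_trig_polys_eq_0: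
  assumes cont: "continuous_on UNIV f" and coeffs: "\<And>m. fcoeff f m = 0" and "h \<in> trig_polys"
  shows "integral {0..2 * pi} (\<lambda>t. complex_of_real (f t) * h t) = 0"
  using \<open>h \<in> trig_polys\<close>
proof induction
  case (cis c m)
  have "integral {0..2 * pi} (\<lambda>t. complex_of_real (f t) * cis (- (of_int (- m) * t))) = 0"
    using coeffs[of "- m"] by (simp add: fcoeff_def)
  then show ?case
    by (simp add: algebra_simps)
next
  case (add g1 g2)
  have int: "(\<lambda>t. complex_of_real (f t) * g t) integrable_on {0..2 * pi}" if "g \<in> trig_polys" for g
    using that by (intro integrable_continuous_interval continuous_intros continuous_on_subset[OF cont]
        continuous_on_subset[OF continuous_on_trig_polys]) auto
  show ?case
    using add integral_add[OF int int, of g1 g2] by (simp add: distrib_left)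
qed

lemma periodic_2pi_cis_eq:
  assumes "periodic_2pi f" and "cis a = cis b"
  shows "f a = f b"
proof -
  have "sin a = sin b \<and> cos a = cos b"
    using assms(2) by (metis cis.sel)
  then obtain q :: int where "a = b + 2 * pi * of_int q"
    using sin_cos_eq_iff by blast
  then show ?thesis
    using periodic_2pi_plus_of_int[OF assms(1), of b q] by (simp add: mult.commute)
qed

lemma continuous_on_sphere_Arg:
  assumes cont: "continuous_on UNIV f" and per: "periodic_2pi f"
  shows "continuous_on (sphere 0 1) (\<lambda>z::complex. f (Arg z))"
proof (rule continuous_at_imp_continuous_on, intro ballI)
  fix z :: complex assume z: "z \<in> sphere 0 1"
  have f: "isCont f x" for x
    using cont by (simp add: continuous_on_eq_continuous_at)
  show "isCont (\<lambda>z. f (Arg z)) z"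
  proof (cases "z \<in> \<real>\<^sub>\<le>\<^sub>0")
    case False
    then show ?thesis
      using continuous_at_compose[OF continuous_at_Arg f] by (simp add: o_def)
  next
    case True
    \<comment> \<open>on the cut of \<open>Arg\<close> switch to \<open>Arg2pi\<close>, which differs from it by a multiple of \<open>2 * pi\<close>\<close>
    then have "z \<notin> \<real>\<^sub>\<ge>\<^sub>0"
      using z by (auto simp: nonpos_Reals_def nonneg_Reals_def)
    then have Arg2pi: "isCont (\<lambda>z. f (Arg2pi z)) z"
      using continuous_at_compose[OF continuous_at_Arg2pi f] by (simp add: o_def)
    have "f (Arg w) = f (Arg2pi w)" if "w \<noteq> 0" for w
    proof (rule periodic_2pi_cis_eq[OF per])
      have "w = of_real (cmod w) * exp (\<i> * of_real (Arg2pi w))"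
        by (rule Arg2pi_eq)
      then have "cis (Arg2pi w) = sgn w"
        using that by (simp add: cis_conv_exp sgn_div_norm scaleR_conv_of_real field_simps)
      then show "cis (Arg w) = cis (Arg2pi w)"
        using cis_Arg[OF that] by simp
    qed
    then have "\<forall>\<^sub>F w in nhds z. f (Arg w) = f (Arg2pi w)"
      using z by (intro eventually_nhds_in_open[of "- {0}", THEN eventually_mono]) auto
    from isCont_cong[OF this] show ?thesis
      using Arg2pi by simp
  qed
qed

lemma integral_square_eq_0_if_fcoeff_eq_0:
  assumes cont: "continuous_on UNIV f" and per: "periodic_2pi f" and coeffs: "\<And>m. fcoeff f m = 0"
  shows "integral {0..2 * pi} (\<lambda>t. f t * f t) = 0"
proof -
  have cont': "continuous_on {0..2 * pi} f"
    using cont continuous_on_subset by blast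
  define A where "A = integral {0..2 * pi} (\<lambda>t. \<bar>f t\<bar>)"
  have int: "(\<lambda>t. \<bar>f t\<bar>) integrable_on {0..2 * pi}" "(\<lambda>t. f t * f t) integrable_on {0..2 * pi}"
    by (intro integrable_continuous_interval continuous_intros cont')+
  have bound: "integral {0..2 * pi} (\<lambda>t. f t * f t) \<le> e * A" if e: "e > 0" for e
  proof -
    \<comment> \<open>Stone--Weierstrass on the circle yields a trigonometric polynomial \<open>\<phi>\<close> close to \<open>f\<close>,
      and \<open>f\<close> is orthogonal to it\<close>
    obtain p where p: "real_polynomial_function p"
      and close: "\<And>z. z \<in> sphere 0 1 \<Longrightarrow> \<bar>f (Arg z) - p z\<bar> < e"
      using Stone_Weierstrass_real_polynomial_function[OF compact_sphere continuous_on_sphere_Arg[OF cont per] e]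
      by blast
    define \<phi> where "\<phi> t = p (cis t)" for t
    have close_\<phi>: "\<bar>f t - \<phi> t\<bar> < e" for t
      using close[of "cis t"] periodic_2pi_cis_eq[OF per, of "Arg (cis t)" t] by (simp add: \<phi>_def cis_Arg)
    have trig: "(\<lambda>t. complex_of_real (\<phi> t)) \<in> trig_polys"
      unfolding \<phi>_def by (rule real_polynomial_function_cis_in_trig_polys[OF p])
    have "continuous_on UNIV (\<lambda>t. Re (complex_of_real (\<phi> t)))"
      by (intro continuous_intros continuous_on_trig_polys[OF trig])
    then have "continuous_on {0..2 * pi} \<phi>"
      using continuous_on_subset by fastforce
    then have int_\<phi>: "(\<lambda>t. f t * \<phi> t) integrable_on {0..2 * pi}"
      "(\<lambda>t. f t * (f t - \<phi> t)) integrable_on {0..2 * pi}"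
      using cont' by (auto intro!: integrable_continuous_interval continuous_intros)
    have "complex_of_real (integral {0..2 * pi} (\<lambda>t. f t * \<phi> t))
        = integral {0..2 * pi} (\<lambda>t. complex_of_real (f t) * complex_of_real (\<phi> t))"
      using integral_unique[OF has_integral_of_real[where 'b = complex, OF integrable_integral[OF int_\<phi>(1)]]] by simp
    also have "\<dots> = 0"
      by (rule integral_mult_trig_polys_eq_0[OF cont coeffs trig])
    finally have "integral {0..2 * pi} (\<lambda>t. f t * \<phi> t) = 0"
      by simp
    then have "integral {0..2 * pi} (\<lambda>t. f t * f t) = integral {0..2 * pi} (\<lambda>t. f t * (f t - \<phi> t))"
      using integral_add[OF int_\<phi>(2,1)] by (simp add: algebra_simps)
    also have "\<dots> \<le> integral {0..2 * pi} (\<lambda>t. e * \<bar>f t\<bar>)"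
    proof (rule integral_le[OF int_\<phi>(2) integrable_on_mult_right[OF int(1)]])
      fix t
      have "f t * (f t - \<phi> t) \<le> \<bar>f t\<bar> * \<bar>f t - \<phi> t\<bar>"
        by (metis abs_ge_self abs_mult)
      also have "\<dots> \<le> e * \<bar>f t\<bar>"
        using close_\<phi>[of t] by (metis abs_ge_zero less_imp_le mult.commute mult_left_mono)
      finally show "f t * (f t - \<phi> t) \<le> e * \<bar>f t\<bar>" .
    qed
    finally show ?thesis
      by (simp add: A_def)
  qed
  have "A \<ge> 0"
    unfolding A_def by (rule integral_nonneg[OF int(1)]) simp
  have "integral {0..2 * pi} (\<lambda>t. f t * f t) \<le> 0"
  proof (rule field_le_epsilon)
    fix d :: real assume "d > 0"
    have "integral {0..2 * pi} (\<lambda>t. f t * f t) \<le> d / (A + 1) * A"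
      using bound[of "d / (A + 1)"] \<open>d > 0\<close> \<open>A \<ge> 0\<close> by simp
    also have "\<dots> \<le> d"
      using \<open>d > 0\<close> \<open>A \<ge> 0\<close> by (simp add: field_simps)
    finally show "integral {0..2 * pi} (\<lambda>t. f t * f t) \<le> 0 + d"
      by simp
  qed
  moreover have "integral {0..2 * pi} (\<lambda>t. f t * f t) \<ge> 0"
    by (rule integral_nonneg[OF int(2)]) simp
  ultimately show ?thesis
    by simp
qed

lemma fcoeff_eq_0_imp_eq_0:
  assumes cont: "continuous_on UNIV f" and per: "periodic_2pi f" and coeffs: "\<And>m. fcoeff f m = 0"
  shows "f t = 0"
proof -
  define s where "s = t - of_int \<lfloor>t / (2 * pi)\<rfloor> * (2 * pi)"
  have s: "s \<in> cbox 0 (2 * pi)"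
    using floor_divide_lower[of "2 * pi" t] floor_divide_upper[of "2 * pi" t]
    by (simp add: s_def algebra_simps)
  have cont': "continuous_on (cbox 0 (2 * pi)) (\<lambda>t. f t * f t)"
    by (intro continuous_intros continuous_on_subset[OF cont]) simp_all
  then have "((\<lambda>t. f t * f t) has_integral 0) (cbox 0 (2 * pi))"
    using integral_square_eq_0_if_fcoeff_eq_0[OF assms] integrable_continuous[OF cont']
    by (metis box_real(2) has_integral_integral)
  moreover have "box 0 (2 * pi) \<noteq> {}"
    using pi_gt_zero by (simp add: box_ne_empty not_le)
  ultimately have "f s * f s = 0"
    using has_integral_0_cbox_imp_0[OF cont' _ _ _ s] by simp
  then show ?thesis
    using periodic_2pi_plus_of_int[OF per, of s "\<lfloor>t / (2 * pi)\<rfloor>"] by (simp add: s_def)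
qed

lemma fcoeff_inject:
  assumes "continuous_on UNIV f" "continuous_on UNIV g" "periodic_2pi f" "periodic_2pi g"
    and "fcoeff f = fcoeff g"
  shows "f = g"
proof
  fix t
  have "f t - g t = 0"
    using assms fcoeff_eq_0_imp_eq_0[of "\<lambda>t. f t - g t"]
    by (auto intro!: continuous_intros simp: periodic_2pi_def fcoeff_diff)
  then show "f t = g t"
    by simp
qed

section \<open>Fourier coefficients of \<open>d\<^sub>k\<close>\<close>

lemma fcoeff_dcoef_truncate_omega:
  assumes "k \<ge> 2" and "v0 \<noteq> 0"
    and analytic: "\<And>j. j \<ge> 1 \<Longrightarrow> real_analytic (U j) \<and> real_analytic (V j)" and "periodic_2pi (V 1)"
  shows "fcoeff (dcoef U V \<omega> u0 v0 s0 k) n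
           = fcoeff (dcoef U V (\<lambda>j. if j \<le> k - 2 then \<omega> j else 0) u0 v0 s0 k) n
             + complex_of_real (u0 / v0\<^sup>2 * s0 * \<omega> (k - 1))
               * (of_int n * \<i> * fcoeff (V 1) n * exp (- (of_int n * \<i> * of_real (s0 * \<omega> 0))))"
proof -
  let ?\<omega>' = "\<lambda>j. if j \<le> k - 2 then \<omega> j else 0"
  let ?c = "u0 / v0\<^sup>2 * s0 * \<omega> (k - 1)"
  have cont_dcoef: "continuous_on UNIV (dcoef U V ?\<omega>' u0 v0 s0 k)"
  proof (rule continuous_on_dcoef[OF assms(2)])
    show "continuous_on UNIV (U j)" if "j \<ge> 1" for j
      using real_analytic_continuous_on_deriv_funpow[of "U j" 0] analytic[OF that] by simp
    show "continuous_on UNIV ((deriv ^^ m) (V j))" if "j \<ge> 1" for j m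
      using real_analytic_continuous_on_deriv_funpow[of "V j" m] analytic[OF that] by simp
  qed
  have "continuous_on UNIV (deriv (V 1))"
    using real_analytic_continuous_on_deriv_funpow[of "V 1" 1] analytic[of 1] by simp
  then have cont_deriv: "continuous_on UNIV (\<lambda>t. deriv (V 1) (t - s0 * \<omega> 0))"
    using continuous_on_compose2[of UNIV "deriv (V 1)" UNIV "\<lambda>t. t - s0 * \<omega> 0"]
    by (simp add: continuous_on_diff continuous_on_id continuous_on_const)
  have "dcoef U V \<omega> u0 v0 s0 k = (\<lambda>t. dcoef U V ?\<omega>' u0 v0 s0 k t + ?c * deriv (V 1) (t - s0 * \<omega> 0))"
    by (rule ext) (rule dcoef_truncate_omega[OF assms(1,2)])
  then have "fcoeff (dcoef U V \<omega> u0 v0 s0 k) n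
      = fcoeff (dcoef U V ?\<omega>' u0 v0 s0 k) n + fcoeff (\<lambda>t. ?c * deriv (V 1) (t - s0 * \<omega> 0)) n"
    by (simp only: fcoeff_add[OF cont_dcoef continuous_on_mult_left[OF cont_deriv]])
  also have "fcoeff (\<lambda>t. ?c * deriv (V 1) (t - s0 * \<omega> 0)) n
      = complex_of_real ?c * fcoeff (\<lambda>t. deriv (V 1) (t - s0 * \<omega> 0)) n"
    by (rule fcoeff_cmult)
  also have "fcoeff (\<lambda>t. deriv (V 1) (t - s0 * \<omega> 0)) n
      = of_int n * \<i> * fcoeff (V 1) n * exp (- (of_int n * \<i> * of_real (s0 * \<omega> 0)))"
    using analytic[of 1] assms(4) by (intro fcoeff_deriv_shift) simp_all
  finally show ?thesis .
qed

definition analytic_periodic_family :: "(nat \<Rightarrow> real \<Rightarrow> real) \<Rightarrow> bool" where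
  "analytic_periodic_family W \<longleftrightarrow> (\<forall>j\<ge>1. real_analytic (W j) \<and> periodic_2pi (W j))"

definition fourier_data :: "nat \<Rightarrow> (nat \<Rightarrow> real \<Rightarrow> real) \<Rightarrow> nat \<Rightarrow> int \<Rightarrow> complex" where
  "fourier_data k W = (\<lambda>j m. if 1 \<le> j \<and> j \<le> k then fcoeff (W j) m else 0)"

lemma dcoef_eq_if_fourier_data_eq:
  assumes "v0 \<noteq> 0"
    and "analytic_periodic_family U" "analytic_periodic_family U'"
    and "analytic_periodic_family V" "analytic_periodic_family V'"
    and "fourier_data k U = fourier_data k U'" "fourier_data k V = fourier_data k V'"
  shows "dcoef U V \<omega> u0 v0 s0 k = dcoef U' V' \<omega> u0 v0 s0 k"
proof (rule dcoef_cong[OF assms(1)])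
  fix j assume j: "1 \<le> j" "j \<le> k"
  have "fcoeff (U j) = fcoeff (U' j)" "fcoeff (V j) = fcoeff (V' j)"
    using fun_cong[OF assms(6), of j] fun_cong[OF assms(7), of j] j by (simp_all add: fourier_data_def)
  moreover have "continuous_on UNIV (W j) \<and> periodic_2pi (W j)" if "analytic_periodic_family W" for W
    using that j real_analytic_continuous_on_deriv_funpow[of "W j" 0] by (simp add: analytic_periodic_family_def)
  ultimately show "U j = U' j \<and> V j = V' j"
    using assms(2-5) fcoeff_inject by blast
qed

lemma some_in_fibre_eq:
  assumes "P x" and "\<And>y. P y \<Longrightarrow> g y = g x \<Longrightarrow> f y = f x"
  shows "f (SOME y. P y \<and> g y = g x) = f x"
proof -
  have "P (SOME y. P y \<and> g y = g x) \<and> g (SOME y. P y \<and> g y = g x) = g x"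
    by (rule someI[of _ x]) (simp add: assms(1))
  then show ?thesis
    using assms(2)[of "SOME y. P y \<and> g y = g x"] by simp
qed

theorem lemma3:
  fixes u0 v0 s0 :: real and k :: nat and n :: int
  assumes "u0 > 0" and "v0 > 0" and "s0 > 1" and "k \<ge> 2"
  shows "\<exists>H :: (nat \<Rightarrow> int \<Rightarrow> complex) \<Rightarrow> (nat \<Rightarrow> int \<Rightarrow> complex) \<Rightarrow> (nat \<Rightarrow> real) \<Rightarrow> complex.
    \<forall>(U :: nat \<Rightarrow> real \<Rightarrow> real) (V :: nat \<Rightarrow> real \<Rightarrow> real) (\<omega> :: nat \<Rightarrow> real).
      \<omega> 0 > 0 \<longrightarrow>
      (\<forall>j\<ge>1. real_analytic (U j) \<and> periodic_2pi (U j) \<and>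
              real_analytic (V j) \<and> periodic_2pi (V j)) \<longrightarrow>
      fcoeff (dcoef U V \<omega> u0 v0 s0 k) n =
        complex_of_real (u0 / v0 / v0) * of_int n * \<i> * complex_of_real (\<omega> (k - 1) * s0)
          * fcoeff (V 1) n * exp (- (of_int n * \<i> * complex_of_real (\<omega> 0 * s0)))
        + H (\<lambda>j m. if 1 \<le> j \<and> j \<le> k then fcoeff (U j) m else 0)
            (\<lambda>j m. if 1 \<le> j \<and> j \<le> k then fcoeff (V j) m else 0)
            (\<lambda>j. if j \<le> k - 2 then \<omega> j else 0)"
proof -
  let ?P = "\<lambda>(U, V, w :: nat \<Rightarrow> real). analytic_periodic_family U \<and> analytic_periodic_family V"
  let ?f = "\<lambda>(U, V, w). fcoeff (dcoef U V w u0 v0 s0 k) n"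
  let ?g = "\<lambda>(U, V, w :: nat \<Rightarrow> real). (fourier_data k U, fourier_data k V, w)"
  have fibres: "?f y = ?f x" if "?P y" "?P x" "?g y = ?g x" for x y
  proof -
    obtain U V w where x: "x = (U, V, w)"
      by (rule prod_cases3)
    obtain U' V' w' where y: "y = (U', V', w')"
      by (rule prod_cases3)
    show ?thesis
      using that dcoef_eq_if_fourier_data_eq[of v0 U' U V' V k w' u0 s0] \<open>v0 > 0\<close> by (simp add: x y)
  qed
  \<comment> \<open>the remainder is evaluated at any admissible family with the given Fourier data\<close>
  show ?thesis
  proof (intro exI[of _ "\<lambda>Uh Vh w. ?f (SOME x. ?P x \<and> ?g x = (Uh, Vh, w))"] allI impI)
    fix U V :: "nat \<Rightarrow> real \<Rightarrow> real" and \<omega> :: "nat \<Rightarrow> real"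
    let ?x = "(U, V, \<lambda>j. if j \<le> k - 2 then \<omega> j else 0)"
    assume "\<forall>j\<ge>1. real_analytic (U j) \<and> periodic_2pi (U j) \<and> real_analytic (V j) \<and> periodic_2pi (V j)"
    then have UV: "analytic_periodic_family U" "analytic_periodic_family V"
      by (simp_all add: analytic_periodic_family_def)
    then have "?f (SOME x. ?P x \<and> ?g x = ?g ?x) = ?f ?x"
      by (intro some_in_fibre_eq fibres) auto
    then show "fcoeff (dcoef U V \<omega> u0 v0 s0 k) n =
        complex_of_real (u0 / v0 / v0) * of_int n * \<i> * complex_of_real (\<omega> (k - 1) * s0)
          * fcoeff (V 1) n * exp (- (of_int n * \<i> * complex_of_real (\<omega> 0 * s0)))
        + ?f (SOME x. ?P x \<and> ?g x = (\<lambda>j m. if 1 \<le> j \<and> j \<le> k then fcoeff (U j) m else 0,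
            \<lambda>j m. if 1 \<le> j \<and> j \<le> k then fcoeff (V j) m else 0, \<lambda>j. if j \<le> k - 2 then \<omega> j else 0))"
      using fcoeff_dcoef_truncate_omega[OF \<open>k \<ge> 2\<close>, of v0 U V \<omega> u0 s0 n] \<open>v0 > 0\<close> UV
      by (simp add: analytic_periodic_family_def fourier_data_def power2_eq_square mult_ac)
  qed
qed

end
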